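(* Let $G$ be a finite, simple, connected plane graph of minimum degree $3$ in which no two distinct triangles (cycles of length $3$) share an edge. Let $f$ be the number of faces of $G$ and $f_3$ the number of triangular faces of $G$ (faces whose boundary is a cycle of length $3$). Then $f_3 < \tfrac{2}{3} f$.
   Context: A plane graph is a planar graph together with a fixed embedding in the plane; its faces are the connected components of the complement of the embedding in the plane (including the unbounded face). *)

theory Defs
  imports "HOL-Analysis.Analysis"
begin

definition simple_graph :: "'v set \<Rightarrow> 'v set set \<Rightarrow> bool" where
  "simple_graph V E \<longleftrightarrow> finite V \<and> (\<forall>e\<in>E. e \<subseteq> V \<and> card e = 2)"

definition adj :: "'v set set \<Rightarrow> 'v \<Rightarrow> 'v \<Rightarrow> bool" where
  "adj E u v \<longleftrightarrow> {u, v} \<in> E"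

definition graph_connected :: "'v set \<Rightarrow> 'v set set \<Rightarrow> bool" where
  "graph_connected V E \<longleftrightarrow> V \<noteq> {} \<and> (\<forall>u\<in>V. \<forall>v\<in>V. (adj E)\<^sup>*\<^sup>* u v)"

definition degree :: "'v set set \<Rightarrow> 'v \<Rightarrow> nat" where
  "degree E v = card {e\<in>E. v \<in> e}"

definition min_degree_ge :: "'v set \<Rightarrow> 'v set set \<Rightarrow> nat \<Rightarrow> bool" where
  "min_degree_ge V E k \<longleftrightarrow> (\<forall>v\<in>V. degree E v \<ge> k)"

definition is_triangle :: "'v set set \<Rightarrow> 'v set \<Rightarrow> bool" where
  "is_triangle E T \<longleftrightarrow> (\<exists>a b c. T = {a, b, c} \<and> a \<noteq> b \<and> b \<noteq> c \<and> a \<noteq> c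
      \<and> {a, b} \<in> E \<and> {b, c} \<in> E \<and> {a, c} \<in> E)"

definition no_edge_sharing_triangles :: "'v set set \<Rightarrow> bool" where
  "no_edge_sharing_triangles E \<longleftrightarrow>
     (\<forall>T1 T2. is_triangle E T1 \<and> is_triangle E T2 \<and> T1 \<noteq> T2 \<longrightarrow>
        \<not> (\<exists>e\<in>E. e \<subseteq> T1 \<and> e \<subseteq> T2))"

definition plane_embedding ::
  "'v set \<Rightarrow> 'v set set \<Rightarrow> ('v \<Rightarrow> complex) \<Rightarrow> ('v set \<Rightarrow> real \<Rightarrow> complex) \<Rightarrow> bool" where
  "plane_embedding V E pos \<gamma> \<longleftrightarrow>
     inj_on pos V \<and>
     (\<forall>e\<in>E. arc (\<gamma> e) \<and> {pathstart (\<gamma> e), pathfinish (\<gamma> e)} = pos ` e) \<and>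
     (\<forall>e\<in>E. \<forall>v\<in>V. pos v \<in> path_image (\<gamma> e) \<longrightarrow> v \<in> e) \<and>
     (\<forall>e\<in>E. \<forall>e'\<in>E. e \<noteq> e' \<longrightarrow>
        path_image (\<gamma> e) \<inter> path_image (\<gamma> e') \<subseteq> pos ` (e \<inter> e'))"

definition drawing :: "'v set \<Rightarrow> 'v set set \<Rightarrow> ('v \<Rightarrow> complex) \<Rightarrow> ('v set \<Rightarrow> real \<Rightarrow> complex) \<Rightarrow> complex set" where
  "drawing V E pos \<gamma> = pos ` V \<union> (\<Union>e\<in>E. path_image (\<gamma> e))"

definition faces :: "'v set \<Rightarrow> 'v set set \<Rightarrow> ('v \<Rightarrow> complex) \<Rightarrow> ('v set \<Rightarrow> real \<Rightarrow> complex) \<Rightarrow> complex set set" where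
  "faces V E pos \<gamma> = {connected_component_set (- drawing V E pos \<gamma>) x | x. x \<notin> drawing V E pos \<gamma>}"

definition triangular_face :: "'v set set \<Rightarrow> ('v \<Rightarrow> complex) \<Rightarrow> ('v set \<Rightarrow> real \<Rightarrow> complex) \<Rightarrow> complex set \<Rightarrow> bool" where
  "triangular_face E pos \<gamma> F \<longleftrightarrow>
     (\<exists>a b c. a \<noteq> b \<and> b \<noteq> c \<and> a \<noteq> c \<and> {a, b} \<in> E \<and> {b, c} \<in> E \<and> {a, c} \<in> E \<and>
        frontier F = path_image (\<gamma> {a, b}) \<union> path_image (\<gamma> {b, c}) \<union> path_image (\<gamma> {a, c}))"

end

theory Submission
  imports Defs
begin

(* Euler's formula f = e - v + 2 holds for the drawing: the drawing of a spanning tree has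
   connected complement by Janiszewski's theorem, and each remaining edge is a chord of a
   path-connected compact set, which by the Jordan curve theorem splits exactly one
   complementary component into two.  The triangles through a vertex use pairwise disjoint
   pairs of its edges, so for the number t of triangles, double counting with minimum degree 3
   gives 3t + 2v <= 2e.  A triangle bounds at most one face: two faces with the same triangular
   frontier would be its inside and outside, leaving no room for a vertex of degree 3.
   Hence 3 f_3 <= 3t <= 2e - 2v = 2f - 4. *)

lemma connected_component_Diff_compact:
  fixes A S :: "complex set"
  assumes A: "compact A" and S: "open S" "connected S" "connected (A \<inter> frontier S)"
    and zw: "connected_component (- A) z w" "z \<in> S" "w \<in> S"
  shows "connected_component (S - A) z w"
proof -
  have "connected_component (- ((A \<inter> closure S) \<union> - S)) z w"
  proof (rule Janiszewski)
    show "compact (A \<inter> closure S)" using A by (simp add: compact_Int_closed)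
    show "closed (- S)" using S(1) by (simp add: closed_Compl)
    have "A \<inter> closure S \<inter> - S = A \<inter> frontier S"
      using S(1) by (auto simp: frontier_def interior_open)
    then show "connected (A \<inter> closure S \<inter> - S)" using S(3) by simp
    show "connected_component (- (A \<inter> closure S)) z w"
      by (rule connected_component_of_subset[OF zw(1)]) auto
    show "connected_component (- (- S)) z w"
      using S(2) zw(2,3) by (auto simp: connected_component_def)
  qed
  moreover have "- ((A \<inter> closure S) \<union> - S) = S - A" using closure_subset by blast
  ultimately show ?thesis by simp
qed

lemma components_complement_split:
  fixes A B :: "'a::topological_space set"
  assumes AB: "A \<subseteq> B" and C: "C \<in> components (- A)" "B - A \<subseteq> C"
    and xy: "x \<in> C - B" "y \<in> C - B"
    and cover: "C - B \<subseteq> connected_component_set (- B) x \<union> connected_component_set (- B) y"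
  shows "components (- B) = insert (connected_component_set (- B) x)
    (insert (connected_component_set (- B) y) (components (- A) - {C}))"
proof -
  have other: "D \<in> components (- B)" if D: "D \<in> components (- A)" "D \<noteq> C" for D
  proof (rule components_intermediate_subset[OF D(1)])
    have "D \<inter> C = {}" using D C(1) components_eq by blast
    then show "D \<subseteq> - B" using in_components_subset[OF D(1)] C(2) by blast
  qed (use AB in blast)
  show ?thesis
  proof (intro equalityI subsetI)
    fix D assume D: "D \<in> components (- B)"
    then obtain z where z: "z \<in> - B" "D = connected_component_set (- B) z"
      by (auto simp: components_iff)
    show "D \<in> insert (connected_component_set (- B) x)
      (insert (connected_component_set (- B) y) (components (- A) - {C}))"
    proof (cases "z \<in> C")
      case True
      then have "z \<in> connected_component_set (- B) x \<union> connected_component_set (- B) y"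
        using z cover by blast
      then have "D = connected_component_set (- B) x \<or> D = connected_component_set (- B) y"
        using z(2) by (metis Un_iff connected_component_eq)
      then show ?thesis by blast
    next
      case False
      define D' where "D' = connected_component_set (- A) z"
      have "z \<in> - A" using z(1) AB by blast
      then have D': "D' \<in> components (- A)" "z \<in> D'" by (simp_all add: D'_def componentsI)
      then have "D' \<noteq> C" using False by blast
      moreover have "z \<in> D" using z by simp
      ultimately have "D = D'" using components_eq[OF D other[OF D'(1)]] D'(2) by blast
      then show ?thesis using D'(1) \<open>D' \<noteq> C\<close> by blast
    qed
  qed (use xy other in \<open>auto intro: componentsI\<close>)
qed

lemma card_components_split:
  fixes A B :: "'a::topological_space set"
  assumes AB: "A \<subseteq> B" and C: "C \<in> components (- A)" "B - A \<subseteq> C"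
    and xy: "x \<in> C - B" "y \<in> C - B" "\<not> connected_component (- B) x y"
    and cover: "C - B \<subseteq> connected_component_set (- B) x \<union> connected_component_set (- B) y"
    and fin: "finite (components (- A))"
  shows "finite (components (- B)) \<and> card (components (- B)) = Suc (card (components (- A)))"
proof -
  define X where "X = connected_component_set (- B) x"
  define Y where "Y = connected_component_set (- B) y"
  have "X \<noteq> Y" using xy unfolding X_def Y_def by (metis Diff_iff connected_component_eq_eq Compl_iff)
  have "connected_component_set (- B) z \<subseteq> C" if "z \<in> C - B" for z
    using that AB connected_component_subset[of "- B" z]
    by (intro components_maximal[OF C(1)]) auto
  then have "X \<subseteq> C" "Y \<subseteq> C" using xy unfolding X_def Y_def by auto
  moreover have "x \<in> X" "y \<in> Y" using xy(1,2) unfolding X_def Y_def by simp_all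
  ultimately have "X \<notin> components (- A) - {C}" "Y \<notin> components (- A) - {C}"
    using C(1) components_eq by blast+
  moreover have "card (components (- A)) > 0" using fin C(1) card_gt_0_iff by blast
  ultimately show ?thesis
    using components_complement_split[OF AB C xy(1,2) cover] fin C(1) \<open>X \<noteq> Y\<close>
    unfolding X_def Y_def by simp
qed

lemma chord_closes_Jordan_curve:
  fixes A :: "complex set"
  assumes A: "path_connected A" and g: "arc g"
    and Ag: "A \<inter> path_image g = {pathstart g, pathfinish g}"
  obtains c where "simple_path c" "pathfinish c = pathstart c"
    "path_image g \<subseteq> path_image c" "path_image c \<subseteq> A \<union> path_image g" "connected (A \<inter> path_image c)"
proof -
  have "pathstart g \<in> A" "pathfinish g \<in> A" using Ag by auto
  then obtain d where d: "arc d" "path_image d \<subseteq> A"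
      "pathstart d = pathstart g" "pathfinish d = pathfinish g"
    using path_connected_arcwise A arc_distinct_ends[OF g] by metis
  have "simple_path (g +++ reversepath d)"
    using simple_path_join_loop_eq[of "reversepath d" g] g d Ag by (auto simp: arc_reversepath)
  moreover have J: "path_image (g +++ reversepath d) = path_image g \<union> path_image d"
    using d by (simp add: path_image_join)
  moreover have "A \<inter> path_image g \<subseteq> path_image d"
    unfolding Ag using d(3,4) pathstart_in_path_image[of d] pathfinish_in_path_image[of d] by auto
  then have "A \<inter> path_image (g +++ reversepath d) = path_image d" using d(2) J by auto
  ultimately show ?thesis
    using that[of "g +++ reversepath d"] d by (auto simp: connected_arc_image)
qed

lemma open_Int_Jordan_side_nonempty:
  fixes c :: "real \<Rightarrow> complex"
  assumes c: "simple_path c" "pathfinish c = pathstart c"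
    and U: "open U" "m \<in> U" "m \<in> path_image c"
    and S: "S \<in> {inside (path_image c), outside (path_image c)}"
  shows "U \<inter> S \<noteq> {}"
proof -
  have "frontier S = path_image c" using S Jordan_inside_outside[OF c] by blast
  then have "m \<in> closure S" using U(3) unfolding frontier_def by blast
  then show ?thesis using U(1,2) open_Int_closure_eq_empty[of U S] by blast
qed

lemma arc_interior_in_component:
  fixes A :: "'a::real_normed_vector set"
  assumes A: "closed A" and g: "arc g" and Ag: "A \<inter> path_image g = {pathstart g, pathfinish g}"
  obtains C where "C \<in> components (- A)" "path_image g - A \<noteq> {}" "path_image g - A \<subseteq> C"
proof -
  have "g (1/2) \<in> path_image g" by (simp add: path_image_def)
  moreover have "g (1/2) \<notin> {pathstart g, pathfinish g}"
    using arcD[OF g, of "1/2" 0] arcD[OF g, of "1/2" 1] by (auto simp: pathstart_def pathfinish_def)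
  ultimately have m: "g (1/2) \<in> path_image g - A" using Ag by blast
  have "path_image g - A = path_image g - {pathstart g, pathfinish g}" using Ag by blast
  then have "connected (path_image g - A)"
    using connected_simple_path_endless[OF arc_imp_simple_path[OF g]] by simp
  then have "path_image g - A \<subseteq> connected_component_set (- A) (g (1/2))"
    using m by (intro connected_component_maximal) auto
  then show ?thesis using that m by (auto intro: componentsI)
qed

lemma connected_component_Un_Jordan_curve_side:
  fixes A :: "complex set" and c :: "real \<Rightarrow> complex"
  assumes c: "simple_path c" "pathfinish c = pathstart c"
    and S: "S \<in> {inside (path_image c), outside (path_image c)}"
    and A: "compact A" "connected (A \<inter> path_image c)"
    and zw: "connected_component (- A) z w" "z \<in> S" "w \<in> S"
  shows "connected_component (- (A \<union> path_image c)) z w"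
proof -
  have "open S" "connected S" "frontier S = path_image c" using S Jordan_inside_outside[OF c] by blast+
  then have "connected_component (S - A) z w"
    using A zw by (intro connected_component_Diff_compact) auto
  moreover have "S \<inter> path_image c = {}" using S inside_no_overlap outside_no_overlap by blast
  then have "S - A \<subseteq> - (A \<union> path_image c)" by blast
  ultimately show ?thesis by (rule connected_component_of_subset)
qed

lemma inside_outside_not_connected_component:
  assumes "x \<in> inside S" "y \<in> outside S"
  shows "\<not> connected_component (- S) x y"
proof
  assume "connected_component (- S) x y"
  then have "connected_component_set (- S) y = connected_component_set (- S) x"
    by (simp add: connected_component_eq)
  then show False using assms unfolding inside_def outside_def by auto
qed

lemma card_components_complement_Un_chord:
  fixes A :: "complex set"
  assumes A: "compact A" "path_connected A" and g: "arc g"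
    and Ag: "A \<inter> path_image g = {pathstart g, pathfinish g}"
    and fin: "finite (components (- A))"
  shows "finite (components (- (A \<union> path_image g)))
    \<and> card (components (- (A \<union> path_image g))) = Suc (card (components (- A)))"
proof -
  define B where "B = A \<union> path_image g"
  obtain c where c: "simple_path c" "pathfinish c = pathstart c"
      "path_image g \<subseteq> path_image c" "path_image c \<subseteq> B" "connected (A \<inter> path_image c)"
    using chord_closes_Jordan_curve[OF A(2) g Ag] unfolding B_def .
  define J where "J = path_image c"
  obtain C where C: "C \<in> components (- A)" "path_image g - A \<noteq> {}" "path_image g - A \<subseteq> C"
    using arc_interior_in_component[OF compact_imp_closed[OF A(1)] g Ag] .
  then obtain m where m: "m \<in> path_image g" "m \<in> C" by blast
  have "open (- A)" using A(1) by (simp add: compact_imp_closed open_Compl)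
  then have "open C" using C(1) by (rule open_components)
  have "C \<subseteq> - A" using C(1) in_components_subset by blast
  have "B - A \<subseteq> C" using C(3) by (auto simp: B_def)
  obtain x0 y0 where x0: "x0 \<in> C" "x0 \<in> inside J" and y0: "y0 \<in> C" "y0 \<in> outside J"
    using open_Int_Jordan_side_nonempty[OF c(1,2) \<open>open C\<close> m(2), of "inside J"]
      open_Int_Jordan_side_nonempty[OF c(1,2) \<open>open C\<close> m(2), of "outside J"] m(1) c(3) unfolding J_def by blast
  have "x0 \<notin> J" "y0 \<notin> J" using x0(2) y0(2) inside_no_overlap outside_no_overlap by blast+
  then have x0y0: "x0 \<in> C - B" "y0 \<in> C - B"
    using x0(1) y0(1) \<open>C \<subseteq> - A\<close> c(3) by (auto simp: B_def J_def)
  have "A \<union> J = B" using c(3,4) by (auto simp: B_def J_def)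
  have C_cc: "connected_component (- A) u v" if "u \<in> C" "v \<in> C" for u v
    using that C(1) by (metis components_iff connected_component_eq mem_Collect_eq)
  show ?thesis
    unfolding B_def[symmetric]
  proof (rule card_components_split[OF _ C(1) \<open>B - A \<subseteq> C\<close> x0y0 _ _ fin])
    show "\<not> connected_component (- B) x0 y0"
      using inside_outside_not_connected_component[OF x0(2) y0(2)] c(4)
        connected_component_of_subset[of "- B" x0 y0 "- J"] unfolding J_def by blast
    show "C - B \<subseteq> connected_component_set (- B) x0 \<union> connected_component_set (- B) y0"
    proof
      fix z assume z: "z \<in> C - B"
      then have "z \<in> inside J \<or> z \<in> outside J"
        using Jordan_inside_outside[OF c(1,2)] c(4) unfolding J_def by blast
      then show "z \<in> connected_component_set (- B) x0 \<union> connected_component_set (- B) y0"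
        using connected_component_Un_Jordan_curve_side[OF c(1,2) _ A(1) c(5) C_cc, folded J_def]
          x0 y0 z \<open>A \<union> J = B\<close> by blast
    qed
  qed (simp add: B_def)
qed

lemma connected_complement_Un_arc:
  fixes A :: "complex set"
  assumes "compact A" "connected (- A)" "arc g" "connected (A \<inter> path_image g)"
  shows "connected (- (A \<union> path_image g))"
proof (rule Janiszewski_connected)
  show "connected (- path_image g)"
    using assms(3) connected_arc_complement by fastforce
qed (use assms in \<open>auto simp: closed_arc_image\<close>)

lemma open_connected_frontier_Jordan_curve:
  fixes c :: "real \<Rightarrow> complex"
  assumes c: "simple_path c" "pathfinish c = pathstart c"
    and F: "open F" "connected F" "frontier F = path_image c"
  shows "F = inside (path_image c) \<or> F = outside (path_image c)"
proof -
  let ?J = "path_image c"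
  note Jo = Jordan_inside_outside[OF c]
  have "F \<inter> ?J = {}" using F(1,3) frontier_disjoint_eq by blast
  then have "F \<subseteq> inside ?J \<union> outside ?J" using Jo by blast
  then have "inside ?J \<inter> F = {} \<or> outside ?J \<inter> F = {}"
    using connectedD[OF F(2), of "inside ?J" "outside ?J"] Jo by blast
  then obtain S where S: "S \<in> {inside ?J, outside ?J}" "F \<subseteq> S"
    using \<open>F \<subseteq> inside ?J \<union> outside ?J\<close> by blast
  have "F \<noteq> {}" using F(3) by auto
  have "connected S" using S Jo by blast
  moreover have "S \<inter> ?J = {}" using S inside_no_overlap outside_no_overlap by blast
  moreover have "S \<inter> F \<noteq> {}" using S(2) \<open>F \<noteq> {}\<close> by blast
  ultimately have "S - F = {}" using connected_Int_frontier[of S F] F(3) by blast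
  then show ?thesis using S by blast
qed

lemma arc_reorient:
  assumes "arc g" "{pathstart g, pathfinish g} = {x, y}"
  obtains h where "arc h" "pathstart h = x" "pathfinish h = y" "path_image h = path_image g"
proof (cases "pathstart g = x")
  case True
  then show ?thesis using assms arc_distinct_ends that by (fastforce simp: doubleton_eq_iff)
next
  case False
  then show ?thesis using assms that[of "reversepath g"] by (auto simp: doubleton_eq_iff arc_reversepath)
qed

lemma simple_closed_path_three_arcs:
  fixes g1 g2 g3 :: "real \<Rightarrow> complex"
  assumes arcs: "arc g1" "arc g2" "arc g3"
    and ends: "{pathstart g1, pathfinish g1} = {a, b}" "{pathstart g2, pathfinish g2} = {b, c}"
      "{pathstart g3, pathfinish g3} = {c, a}"
    and meets: "path_image g1 \<inter> path_image g2 \<subseteq> {b}" "path_image g2 \<inter> path_image g3 \<subseteq> {c}"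
      "path_image g1 \<inter> path_image g3 \<subseteq> {a}"
  obtains k where "simple_path k" "pathfinish k = pathstart k"
    "path_image k = path_image g1 \<union> path_image g2 \<union> path_image g3"
proof -
  obtain h1 where h1: "arc h1" "pathstart h1 = a" "pathfinish h1 = b" "path_image h1 = path_image g1"
    using arc_reorient[OF arcs(1) ends(1)] by blast
  obtain h2 where h2: "arc h2" "pathstart h2 = b" "pathfinish h2 = c" "path_image h2 = path_image g2"
    using arc_reorient[OF arcs(2) ends(2)] by blast
  obtain h3 where h3: "arc h3" "pathstart h3 = c" "pathfinish h3 = a" "path_image h3 = path_image g3"
    using arc_reorient[OF arcs(3) ends(3)] by blast
  have "arc (h2 +++ h3)" using h2 h3 meets(2) by (intro arc_join) auto
  moreover have "path_image (h2 +++ h3) = path_image g2 \<union> path_image g3"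
    using h2 h3 by (simp add: path_image_join)
  ultimately have "simple_path (h1 +++ (h2 +++ h3))"
    using simple_path_join_loop_eq[of "h2 +++ h3" h1] h1 h2 h3 meets(1,3) by auto
  moreover have "path_image (h1 +++ (h2 +++ h3)) = path_image g1 \<union> path_image g2 \<union> path_image g3"
    using h1 h2 \<open>path_image (h2 +++ h3) = _\<close> by (simp add: path_image_join Un_assoc)
  ultimately show ?thesis using that h1 h3 by simp
qed

lemma sum_card_incidences:
  assumes "finite V" "finite X" "\<And>T. T \<in> X \<Longrightarrow> T \<subseteq> V"
  shows "(\<Sum>v\<in>V. card {T \<in> X. v \<in> T}) = (\<Sum>T\<in>X. card T)"
proof -
  have "(\<Sum>v\<in>V. card {T \<in> X. v \<in> T}) = (\<Sum>v\<in>V. \<Sum>T\<in>X. if v \<in> T then 1 else 0)"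
    using assms(2) by (intro sum.cong refl) (simp add: sum.If_cases Int_def)
  also have "\<dots> = (\<Sum>T\<in>X. \<Sum>v\<in>V. if v \<in> T then 1 else 0)" by (rule sum.swap)
  also have "\<dots> = (\<Sum>T\<in>X. card T)"
  proof (intro sum.cong refl)
    fix T assume "T \<in> X"
    then have "V \<inter> T = T" using assms(3) by blast
    then show "(\<Sum>v\<in>V. if v \<in> T then 1 else 0) = card T"
      using assms(1) by (simp add: sum.If_cases)
  qed
  finally show ?thesis .
qed

lemma rtranclp_leaves_set:
  assumes "r\<^sup>*\<^sup>* a b" "a \<in> W" "b \<notin> W"
  obtains x y where "r x y" "x \<in> W" "y \<notin> W"
  using assms(1,3) that
proof (induction rule: rtranclp_induct)
  case base
  then show ?case using assms(2) by blast
next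
  case (step b c)
  then show ?case by (cases "b \<in> W") auto
qed

locale finite_simple_graph =
  fixes V :: "'v set" and E :: "'v set set"
  assumes simple: "simple_graph V E"
begin

lemma finite_vertices: "finite V"
  using simple by (simp add: simple_graph_def)

lemma card_edge: "e \<in> E \<Longrightarrow> card e = 2"
  using simple by (simp add: simple_graph_def)

lemma edge_subset: "e \<in> E \<Longrightarrow> e \<subseteq> V"
  using simple by (simp add: simple_graph_def)

lemma edgeE:
  assumes "e \<in> E"
  obtains x y where "e = {x, y}" "x \<noteq> y" "x \<in> V" "y \<in> V"
  using card_edge[OF assms] edge_subset[OF assms] by (metis card_2_iff insert_subset)

lemma finite_edges: "finite E"
proof (rule finite_subset)
  show "E \<subseteq> Pow V" using edge_subset by blast
qed (simp add: finite_vertices)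

lemma degree_le_card: "v \<in> V \<Longrightarrow> degree E v \<le> card V - 1"
proof -
  assume "v \<in> V"
  have "{e \<in> E. v \<in> e} \<subseteq> (\<lambda>u. {v, u}) ` (V - {v})"
  proof
    fix e assume e: "e \<in> {e \<in> E. v \<in> e}"
    then obtain x y where "e = {x, y}" "x \<noteq> y" "x \<in> V" "y \<in> V" by (blast elim: edgeE)
    then show "e \<in> (\<lambda>u. {v, u}) ` (V - {v})" using e by (auto simp: insert_commute)
  qed
  then have "degree E v \<le> card (V - {v})"
    unfolding degree_def using finite_vertices by (meson card_image_le finite_Diff card_mono finite_imageI le_trans)
  then show ?thesis using \<open>v \<in> V\<close> by simp
qed

lemma connected_edge_leaving:
  assumes "graph_connected V E" "W \<subseteq> V" "W \<noteq> {}" "W \<noteq> V"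
  obtains x y where "{x, y} \<in> E" "x \<in> W" "y \<in> V" "y \<notin> W"
proof -
  obtain w u where "w \<in> W" "u \<in> V" "u \<notin> W" using assms(2-4) by blast
  then have "(adj E)\<^sup>*\<^sup>* w u" using assms(1,2) unfolding graph_connected_def by blast
  then obtain x y where "{x, y} \<in> E" "x \<in> W" "y \<notin> W"
    using \<open>w \<in> W\<close> \<open>u \<notin> W\<close> unfolding adj_def by (elim rtranclp_leaves_set) auto
  moreover have "y \<in> V" using edge_subset[OF \<open>{x, y} \<in> E\<close>] by simp
  ultimately show ?thesis using that by blast
qed

lemma edges_within_triangle:
  assumes "a \<noteq> b" "b \<noteq> c" "a \<noteq> c" "{a, b} \<in> E" "{b, c} \<in> E" "{a, c} \<in> E"
  shows "{e \<in> E. e \<subseteq> {a, b, c}} = {{a, b}, {b, c}, {a, c}}"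
proof (intro equalityI subsetI)
  fix e assume e: "e \<in> {e \<in> E. e \<subseteq> {a, b, c}}"
  then obtain x y where "e = {x, y}" "x \<noteq> y" by (blast elim: edgeE)
  then show "e \<in> {{a, b}, {b, c}, {a, c}}" using e by (auto simp: insert_commute)
qed (use assms in auto)

lemma triangleE:
  assumes "is_triangle E T"
  obtains a b c where "T = {a, b, c}" "a \<noteq> b" "b \<noteq> c" "a \<noteq> c"
    "{a, b} \<in> E" "{b, c} \<in> E" "{a, c} \<in> E"
  using assms unfolding is_triangle_def by blast

lemma triangle_subset: "is_triangle E T \<Longrightarrow> T \<subseteq> V"
  by (elim triangleE) (auto dest: edge_subset)

lemma card_triangle: "is_triangle E T \<Longrightarrow> card T = 3"
  unfolding is_triangle_def by auto

lemma finite_triangles: "finite {T. is_triangle E T}"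
proof (rule finite_subset)
  show "{T. is_triangle E T} \<subseteq> Pow V" using triangle_subset by blast
qed (simp add: finite_vertices)

lemma triangle_edge:
  assumes "is_triangle E T" "u \<in> T" "w \<in> T" "u \<noteq> w"
  shows "{u, w} \<in> E"
  using assms unfolding is_triangle_def by (auto simp: insert_commute)

lemma card_triangle_edges_at:
  assumes T: "is_triangle E T" and v: "v \<in> T"
  shows "card {e \<in> E. v \<in> e \<and> e \<subseteq> T} = 2"
proof -
  have "{e \<in> E. v \<in> e \<and> e \<subseteq> T} = (\<lambda>u. {v, u}) ` (T - {v})"
  proof (intro equalityI subsetI)
    fix e assume e: "e \<in> {e \<in> E. v \<in> e \<and> e \<subseteq> T}"
    then obtain x y where "e = {x, y}" "x \<noteq> y" by (blast elim: edgeE)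
    then show "e \<in> (\<lambda>u. {v, u}) ` (T - {v})" using e by (auto simp: insert_commute)
  qed (use T v triangle_edge in auto)
  moreover have "inj_on (\<lambda>u. {v, u}) (T - {v})" by (auto intro!: inj_onI simp: doubleton_eq_iff)
  moreover have "card (T - {v}) = 2" using card_triangle[OF T] v by simp
  ultimately show ?thesis by (simp add: card_image)
qed

lemma two_mult_card_triangles_at_le_degree:
  assumes "no_edge_sharing_triangles E"
  shows "2 * card {T. is_triangle E T \<and> v \<in> T} \<le> degree E v"
proof -
  let ?I = "{T. is_triangle E T \<and> v \<in> T}"
  let ?S = "\<lambda>T. {e \<in> E. v \<in> e \<and> e \<subseteq> T}"
  have "finite ?I" using finite_triangles by (rule finite_subset[rotated]) blast
  have "2 * card ?I = (\<Sum>T\<in>?I. card (?S T))"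
    using card_triangle_edges_at by simp
  also have "\<dots> = card (\<Union>T\<in>?I. ?S T)"
  proof (rule card_UN_disjoint[symmetric, OF \<open>finite ?I\<close>])
    show "\<forall>T\<in>?I. finite (?S T)" using finite_edges by simp
    show "\<forall>T1\<in>?I. \<forall>T2\<in>?I. T1 \<noteq> T2 \<longrightarrow> ?S T1 \<inter> ?S T2 = {}"
      using assms unfolding no_edge_sharing_triangles_def by blast
  qed
  also have "\<dots> \<le> degree E v"
    unfolding degree_def using finite_edges by (intro card_mono) auto
  finally show ?thesis .
qed

lemma card_triangles_bound:
  assumes "min_degree_ge V E 3" "no_edge_sharing_triangles E"
  shows "3 * card {T. is_triangle E T} + 2 * card V \<le> 2 * card E"
proof -
  let ?t = "\<lambda>v. card {T. is_triangle E T \<and> v \<in> T}"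
  have "(\<Sum>v\<in>V. ?t v) = 3 * card {T. is_triangle E T}"
    using sum_card_incidences[OF finite_vertices finite_triangles] triangle_subset card_triangle
    by simp
  then have "3 * card {T. is_triangle E T} + 2 * card V = (\<Sum>v\<in>V. ?t v + 2)"
    unfolding sum.distrib by simp
  also have "\<dots> \<le> (\<Sum>v\<in>V. degree E v)"
  proof (rule sum_mono)
    fix v assume "v \<in> V"
    then have "3 \<le> degree E v" using assms(1) by (simp add: min_degree_ge_def)
    then show "?t v + 2 \<le> degree E v"
      using two_mult_card_triangles_at_le_degree[OF assms(2), of v] by linarith
  qed
  also have "\<dots> = 2 * card E"
    using sum_card_incidences[OF finite_vertices finite_edges] edge_subset card_edge
    unfolding degree_def by simp
  finally show ?thesis .
qed

end

locale plane_graph = finite_simple_graph V E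
  for V :: "'v set" and E :: "'v set set" +
  fixes pos :: "'v \<Rightarrow> complex" and \<gamma> :: "'v set \<Rightarrow> real \<Rightarrow> complex"
  assumes embedding: "plane_embedding V E pos \<gamma>"
begin

lemma inj_pos: "inj_on pos V"
  using embedding by (simp add: plane_embedding_def)

lemma arc_edge: "e \<in> E \<Longrightarrow> arc (\<gamma> e)"
  using embedding by (simp add: plane_embedding_def)

lemma edge_ends: "e \<in> E \<Longrightarrow> {pathstart (\<gamma> e), pathfinish (\<gamma> e)} = pos ` e"
  using embedding by (simp add: plane_embedding_def)

lemma vertex_on_edge: "e \<in> E \<Longrightarrow> v \<in> V \<Longrightarrow> pos v \<in> path_image (\<gamma> e) \<Longrightarrow> v \<in> e"
  using embedding by (simp add: plane_embedding_def)

lemma edges_meet: "e \<in> E \<Longrightarrow> e' \<in> E \<Longrightarrow> e \<noteq> e' \<Longrightarrow>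
    path_image (\<gamma> e) \<inter> path_image (\<gamma> e') \<subseteq> pos ` (e \<inter> e')"
  using embedding by (simp add: plane_embedding_def)

lemma end_on_edge: "e \<in> E \<Longrightarrow> v \<in> e \<Longrightarrow> pos v \<in> path_image (\<gamma> e)"
proof -
  assume "e \<in> E" "v \<in> e"
  then have "pos v \<in> {pathstart (\<gamma> e), pathfinish (\<gamma> e)}" using edge_ends by blast
  then show ?thesis by (auto simp: pathstart_in_path_image pathfinish_in_path_image)
qed

lemma drawing_Int_edge:
  assumes "W \<subseteq> V" "F \<subseteq> E" "\<forall>e'\<in>F. e' \<subseteq> W" "e \<in> E" "e \<notin> F"
  shows "drawing W F pos \<gamma> \<inter> path_image (\<gamma> e) = pos ` (e \<inter> W)"
proof (intro equalityI subsetI)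
  fix z assume z: "z \<in> drawing W F pos \<gamma> \<inter> path_image (\<gamma> e)"
  then consider u where "u \<in> W" "z = pos u" | e' where "e' \<in> F" "z \<in> path_image (\<gamma> e')"
    by (auto simp: drawing_def)
  then show "z \<in> pos ` (e \<inter> W)"
  proof cases
    case 1
    then show ?thesis using vertex_on_edge[OF assms(4)] assms(1) z by blast
  next
    case 2
    then have "z \<in> pos ` (e \<inter> e')" using edges_meet[OF assms(4)] assms(2,5) z by blast
    then show ?thesis using 2 assms(3) by blast
  qed
qed (use end_on_edge[OF assms(4)] in \<open>auto simp: drawing_def\<close>)

lemma drawing_insert_edge:
  "drawing W (insert e F) pos \<gamma> = drawing W F pos \<gamma> \<union> path_image (\<gamma> e)"
  by (auto simp: drawing_def)

lemma compact_drawing: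
  assumes "W \<subseteq> V" "F \<subseteq> E"
  shows "compact (drawing W F pos \<gamma>)"
proof -
  have "compact (pos ` W)" using assms(1) finite_vertices by (meson finite_imageI finite_imp_compact finite_subset)
  moreover have "compact (\<Union>e\<in>F. path_image (\<gamma> e))"
    using assms(2) finite_edges arc_edge by (intro compact_UN) (auto intro: finite_subset compact_arc_image)
  ultimately show ?thesis by (simp add: drawing_def compact_Un)
qed

lemma faces_eq_components: "faces V E pos \<gamma> = components (- drawing V E pos \<gamma>)"
  by (auto simp: faces_def components_def)

lemma faceD:
  assumes "F \<in> faces V E pos \<gamma>"
  shows "open F" "connected F" "F \<inter> drawing V E pos \<gamma> = {}"
proof -
  have F: "F \<in> components (- drawing V E pos \<gamma>)" using assms by (simp add: faces_eq_components)
  moreover have "open (- drawing V E pos \<gamma>)"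
    using compact_drawing[of V E] by (simp add: compact_imp_closed open_Compl)
  ultimately show "open F" by (rule open_components[rotated])
  show "connected F" using F by (rule in_components_connected)
  show "F \<inter> drawing V E pos \<gamma> = {}" using in_components_subset[OF F] by blast
qed

lemma spanning_tree_drawing:
  assumes conn: "graph_connected V E"
  shows "n < card V \<Longrightarrow> \<exists>W F. W \<subseteq> V \<and> F \<subseteq> E \<and> (\<forall>e\<in>F. e \<subseteq> W) \<and> card W = Suc n \<and> card F = n
    \<and> path_connected (drawing W F pos \<gamma>) \<and> connected (- drawing W F pos \<gamma>)"
proof (induction n)
  case 0
  obtain v0 where "v0 \<in> V" using conn by (auto simp: graph_connected_def)
  moreover have "drawing {v0} {} pos \<gamma> = {pos v0}" by (simp add: drawing_def)
  ultimately show ?case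
    using path_connected_punctured_universe[of "pos v0"]
    by (intro exI[of _ "{v0}"] exI[of _ "{}"]) (simp add: path_connected_imp_connected)
next
  case (Suc n)
  then obtain W F where WF: "W \<subseteq> V" "F \<subseteq> E" "\<forall>e\<in>F. e \<subseteq> W" "card W = Suc n" "card F = n"
      "path_connected (drawing W F pos \<gamma>)" "connected (- drawing W F pos \<gamma>)"
    by auto
  have "W \<noteq> {}" "W \<noteq> V" using WF(4) Suc.prems by auto
  then obtain x y where xy: "{x, y} \<in> E" "x \<in> W" "y \<in> V" "y \<notin> W"
    using connected_edge_leaving[OF conn WF(1)] by blast
  define e where "e = {x, y}"
  have e: "e \<in> E" "e \<notin> F" "e \<inter> W = {x}" using xy WF(3) by (auto simp: e_def)
  have meet: "drawing W F pos \<gamma> \<inter> path_image (\<gamma> e) = {pos x}"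
    using drawing_Int_edge[OF WF(1-3) e(1,2)] e(3) by simp
  have grow: "drawing (insert y W) (insert e F) pos \<gamma> = drawing W F pos \<gamma> \<union> path_image (\<gamma> e)"
    using end_on_edge[OF e(1), of y] by (auto simp: drawing_def e_def)
  show ?case
  proof (intro exI[of _ "insert y W"] exI[of _ "insert e F"] conjI)
    show "insert y W \<subseteq> V" "insert e F \<subseteq> E" "\<forall>e'\<in>insert e F. e' \<subseteq> insert y W"
      using WF(1-3) xy(3) e(1) by (auto simp: e_def xy)
    show "card (insert y W) = Suc (Suc n)"
      using WF(1,4) xy(4) finite_vertices by (simp add: finite_subset)
    show "card (insert e F) = Suc n"
      using WF(2,5) e(2) finite_edges by (simp add: finite_subset)
    show "path_connected (drawing (insert y W) (insert e F) pos \<gamma>)"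
      unfolding grow using WF(6) arc_edge[OF e(1)] meet
      by (intro path_connected_Un) (auto simp: path_connected_path_image arc_imp_path)
    show "connected (- drawing (insert y W) (insert e F) pos \<gamma>)"
      unfolding grow using compact_drawing[OF WF(1,2)] WF(7) arc_edge[OF e(1)] meet
      by (intro connected_complement_Un_arc) auto
  qed
qed

lemma card_components_add_edges:
  assumes F: "F \<subseteq> E" "path_connected (drawing V F pos \<gamma>)"
    "finite (components (- drawing V F pos \<gamma>))"
    and R: "R \<subseteq> E - F"
  shows "path_connected (drawing V (F \<union> R) pos \<gamma>) \<and> finite (components (- drawing V (F \<union> R) pos \<gamma>))
    \<and> card (components (- drawing V (F \<union> R) pos \<gamma>)) = card (components (- drawing V F pos \<gamma>)) + card R"
  using finite_subset[OF R finite_Diff[OF finite_edges]] R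
proof (induction rule: finite_subset_induct')
  case empty
  then show ?case using F by simp
next
  case (insert e R)
  let ?D = "drawing V (F \<union> R) pos \<gamma>"
  have e: "e \<in> E" "e \<notin> F \<union> R" using insert by auto
  have sub: "F \<union> R \<subseteq> E" "\<forall>e'\<in>F \<union> R. e' \<subseteq> V" using insert.hyps(3) F(1) edge_subset by auto
  have "e \<inter> V = e" using edge_subset[OF e(1)] by blast
  then have "?D \<inter> path_image (\<gamma> e) = pos ` e" using drawing_Int_edge[OF subset_refl sub e] by simp
  then have meet: "?D \<inter> path_image (\<gamma> e) = {pathstart (\<gamma> e), pathfinish (\<gamma> e)}"
    using edge_ends[OF e(1)] by simp
  have grow: "drawing V (F \<union> insert e R) pos \<gamma> = ?D \<union> path_image (\<gamma> e)"
    by (simp add: drawing_insert_edge)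
  have "compact ?D" using sub(1) by (intro compact_drawing) auto
  have IH: "path_connected ?D" "finite (components (- ?D))"
    "card (components (- ?D)) = card (components (- drawing V F pos \<gamma>)) + card R"
    using insert.IH by auto
  have "path_connected (?D \<union> path_image (\<gamma> e))"
    using IH(1) arc_edge[OF e(1)] meet
    by (intro path_connected_Un) (auto simp: path_connected_path_image arc_imp_path)
  moreover have "card (insert e R) = Suc (card R)" using insert.hyps(1,4) by simp
  ultimately show ?case
    unfolding grow using card_components_complement_Un_chord[OF \<open>compact ?D\<close> IH(1) arc_edge[OF e(1)] meet IH(2)] IH(3)
    by simp
qed

theorem euler_formula:
  assumes "graph_connected V E"
  shows "finite (faces V E pos \<gamma>) \<and> card (faces V E pos \<gamma>) + card V = card E + 2"
proof -
  have "card V > 0" using assms finite_vertices by (auto simp: graph_connected_def card_gt_0_iff)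
  then have "card V - 1 < card V" "Suc (card V - 1) = card V" by simp_all
  then obtain W F where WF: "W \<subseteq> V" "F \<subseteq> E" "card W = card V" "card F = card V - 1"
      "path_connected (drawing W F pos \<gamma>)" "connected (- drawing W F pos \<gamma>)"
    using spanning_tree_drawing[OF assms] by metis
  have "W = V" using WF(1,3) finite_vertices by (simp add: card_subset_eq)
  have "compact (drawing V F pos \<gamma>)" using WF(2) by (simp add: compact_drawing)
  then have "drawing V F pos \<gamma> \<noteq> UNIV" using compact_imp_bounded not_bounded_UNIV by metis
  then have "- drawing V F pos \<gamma> \<noteq> {}" by auto
  then have "components (- drawing V F pos \<gamma>) = {- drawing V F pos \<gamma>}"
    using WF(6) \<open>W = V\<close> by (simp add: components_eq_sing_iff)
  then have "finite (faces V E pos \<gamma>) \<and> card (faces V E pos \<gamma>) = 1 + card (E - F)"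
    using card_components_add_edges[OF WF(2) _ _ subset_refl] WF(5) \<open>W = V\<close> Un_Diff_cancel2[of F E] WF(2)
    by (simp add: faces_eq_components Un_absorb1)
  moreover have "card (E - F) = card E - card F" using WF(2) finite_edges by (simp add: card_Diff_subset finite_subset)
  moreover have "card F \<le> card E" using WF(2) finite_edges by (simp add: card_mono)
  ultimately show ?thesis using WF(4) \<open>card V > 0\<close> by auto
qed

lemma drawing_triangle:
  assumes "a \<noteq> b" "b \<noteq> c" "a \<noteq> c" "{a, b} \<in> E" "{b, c} \<in> E" "{a, c} \<in> E"
  shows "drawing {a, b, c} {e \<in> E. e \<subseteq> {a, b, c}} pos \<gamma>
    = path_image (\<gamma> {a, b}) \<union> path_image (\<gamma> {b, c}) \<union> path_image (\<gamma> {a, c})"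
  using edges_within_triangle[OF assms] end_on_edge[OF assms(4)] end_on_edge[OF assms(5)]
  by (auto simp: drawing_def)

lemma triangular_face_frontier:
  assumes "triangular_face E pos \<gamma> F"
  shows "\<exists>T. is_triangle E T \<and> frontier F = drawing T {e \<in> E. e \<subseteq> T} pos \<gamma>"
proof -
  obtain a b c where abc: "a \<noteq> b" "b \<noteq> c" "a \<noteq> c" "{a, b} \<in> E" "{b, c} \<in> E" "{a, c} \<in> E"
      "frontier F = path_image (\<gamma> {a, b}) \<union> path_image (\<gamma> {b, c}) \<union> path_image (\<gamma> {a, c})"
    using assms unfolding triangular_face_def by blast
  then have "is_triangle E {a, b, c}" unfolding is_triangle_def by blast
  with abc show ?thesis using drawing_triangle[OF abc(1-6)] by auto
qed

lemma triangle_drawing_simple_closed_path: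
  assumes "is_triangle E T"
  obtains k where "simple_path k" "pathfinish k = pathstart k"
    "path_image k = drawing T {e \<in> E. e \<subseteq> T} pos \<gamma>"
proof -
  obtain a b c where abc: "T = {a, b, c}" "a \<noteq> b" "b \<noteq> c" "a \<noteq> c"
      "{a, b} \<in> E" "{b, c} \<in> E" "{a, c} \<in> E"
    using assms by (elim triangleE)
  have ca: "{c, a} = {a, c}" by blast
  have "{a, b, c} \<subseteq> V" using abc edge_subset by blast
  then have pos: "pos a \<noteq> pos b" "pos b \<noteq> pos c" "pos a \<noteq> pos c"
    using inj_pos abc(2-4) by (auto dest: inj_onD)
  show ?thesis
  proof (rule simple_closed_path_three_arcs)
    show "arc (\<gamma> {a, b})" "arc (\<gamma> {b, c})" "arc (\<gamma> {c, a})"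
      using abc arc_edge ca by auto
    show "{pathstart (\<gamma> {a, b}), pathfinish (\<gamma> {a, b})} = {pos a, pos b}"
      "{pathstart (\<gamma> {b, c}), pathfinish (\<gamma> {b, c})} = {pos b, pos c}"
      "{pathstart (\<gamma> {c, a}), pathfinish (\<gamma> {c, a})} = {pos c, pos a}"
      using abc edge_ends ca by auto
    show "path_image (\<gamma> {a, b}) \<inter> path_image (\<gamma> {b, c}) \<subseteq> {pos b}"
      "path_image (\<gamma> {b, c}) \<inter> path_image (\<gamma> {c, a}) \<subseteq> {pos c}"
      "path_image (\<gamma> {a, b}) \<inter> path_image (\<gamma> {c, a}) \<subseteq> {pos a}"
      using edges_meet[OF abc(5) abc(6)] edges_meet[OF abc(6) abc(7)] edges_meet[OF abc(5) abc(7)] abc(2-4)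
      by (simp_all add: ca doubleton_eq_iff insert_commute)
  next
    fix k assume k: "simple_path k" "pathfinish k = pathstart k"
      "path_image k = path_image (\<gamma> {a, b}) \<union> path_image (\<gamma> {b, c}) \<union> path_image (\<gamma> {c, a})"
    then have "path_image k = drawing T {e \<in> E. e \<subseteq> T} pos \<gamma>"
      using drawing_triangle[OF abc(2-7)] abc(1) ca by simp
    then show ?thesis using that k(1,2) by blast
  qed
qed

lemma vertices_subset_triangle_if_two_faces:
  assumes T: "is_triangle E T" and F: "F1 \<in> faces V E pos \<gamma>" "F2 \<in> faces V E pos \<gamma>" "F1 \<noteq> F2"
    and frontiers: "frontier F1 = drawing T {e \<in> E. e \<subseteq> T} pos \<gamma>"
      "frontier F2 = drawing T {e \<in> E. e \<subseteq> T} pos \<gamma>"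
  shows "V \<subseteq> T"
proof
  let ?K = "drawing T {e \<in> E. e \<subseteq> T} pos \<gamma>"
  obtain k where k: "simple_path k" "pathfinish k = pathstart k" "path_image k = ?K"
    using T by (rule triangle_drawing_simple_closed_path)
  have "F1 \<in> {inside ?K, outside ?K}" "F2 \<in> {inside ?K, outside ?K}"
    using open_connected_frontier_Jordan_curve[OF k(1,2)] faceD[OF F(1)]
      faceD[OF F(2)] frontiers k(3) by auto
  then have "F1 \<union> F2 = inside ?K \<union> outside ?K" using F(3) by blast
  also have "\<dots> = - ?K" using Jordan_inside_outside[OF k(1,2)] k(3) by simp
  finally have "- ?K \<subseteq> F1 \<union> F2" by simp
  then have drawing_sub: "drawing V E pos \<gamma> \<subseteq> ?K"
    using faceD(3)[OF F(1)] faceD(3)[OF F(2)] by blast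
  fix v assume "v \<in> V"
  then have "pos v \<in> ?K" using drawing_sub by (auto simp: drawing_def)
  then consider "pos v \<in> pos ` T" | e where "e \<in> E" "e \<subseteq> T" "pos v \<in> path_image (\<gamma> e)"
    by (auto simp: drawing_def)
  then show "v \<in> T"
  proof cases
    case 1
    then show ?thesis using inj_pos \<open>v \<in> V\<close> triangle_subset[OF T] by (auto dest: inj_onD)
  next
    case 2
    then show ?thesis using vertex_on_edge \<open>v \<in> V\<close> by blast
  qed
qed

lemma card_triangular_faces_le:
  assumes "min_degree_ge V E 3"
  shows "card {F \<in> faces V E pos \<gamma>. triangular_face E pos \<gamma> F} \<le> card {T. is_triangle E T}"
proof -
  let ?TF = "{F \<in> faces V E pos \<gamma>. triangular_face E pos \<gamma> F}"
  have "\<forall>F\<in>?TF. \<exists>T. is_triangle E T \<and> frontier F = drawing T {e \<in> E. e \<subseteq> T} pos \<gamma>"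
    using triangular_face_frontier by simp
  from bchoice[OF this] obtain \<tau>
    where \<tau>: "\<forall>F\<in>?TF. is_triangle E (\<tau> F) \<and> frontier F = drawing (\<tau> F) {e \<in> E. e \<subseteq> \<tau> F} pos \<gamma>" ..
  have "inj_on \<tau> ?TF"
  proof (rule inj_onI, rule ccontr)
    fix F1 F2 assume F: "F1 \<in> ?TF" "F2 \<in> ?TF" "\<tau> F1 = \<tau> F2" "F1 \<noteq> F2"
    let ?T = "\<tau> F1"
    have T: "is_triangle E ?T" using \<tau> F(1) by blast
    then have "card ?T = 3" "?T \<subseteq> V" by (simp_all add: card_triangle triangle_subset)
    moreover have "V \<subseteq> ?T"
      using vertices_subset_triangle_if_two_faces[OF T _ _ F(4)] \<tau> F by auto
    ultimately have "card V = 3" by auto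
    moreover obtain v where "v \<in> V" using \<open>card ?T = 3\<close> \<open>V \<subseteq> ?T\<close> \<open>?T \<subseteq> V\<close> by fastforce
    ultimately show False using degree_le_card[of v] assms by (auto simp: min_degree_ge_def)
  qed
  moreover have "\<tau> ` ?TF \<subseteq> {T. is_triangle E T}" using \<tau> by blast
  ultimately show ?thesis using finite_triangles by (rule card_inj_on_le)
qed

end

theorem theorem4:
  fixes V :: "'v set" and E :: "'v set set"
    and pos :: "'v \<Rightarrow> complex" and \<gamma> :: "'v set \<Rightarrow> real \<Rightarrow> complex"
  assumes "simple_graph V E"
    and "graph_connected V E"
    and "min_degree_ge V E 3"
    and "no_edge_sharing_triangles E"
    and "plane_embedding V E pos \<gamma>"
  shows "real (card {F \<in> faces V E pos \<gamma>. triangular_face E pos \<gamma> F})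
           < 2 / 3 * real (card (faces V E pos \<gamma>))"
proof -
  interpret plane_graph V E pos \<gamma>
    using assms(1,5) by (simp add: plane_graph_def plane_graph_axioms_def finite_simple_graph_def)
  have "card (faces V E pos \<gamma>) + card V = card E + 2"
    using euler_formula[OF assms(2)] by simp
  moreover have "3 * card {T. is_triangle E T} + 2 * card V \<le> 2 * card E"
    using card_triangles_bound[OF assms(3,4)] .
  moreover have "card {F \<in> faces V E pos \<gamma>. triangular_face E pos \<gamma> F} \<le> card {T. is_triangle E T}"
    using card_triangular_faces_le[OF assms(3)] .
  ultimately have "3 * card {F \<in> faces V E pos \<gamma>. triangular_face E pos \<gamma> F} < 2 * card (faces V E pos \<gamma>)"
    by linarith
  then show ?thesis by simp
qed

end
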